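(* Let $U,V$ be independent Bernoulli random variables with means $p,q\in(0,1]$. Suppose $X,Y$ are real random variables with finite second moments such that $X\perp\!\!\!\perp V\mid U$ and $Y\perp\!\!\!\perp U\mid V$. Then \[{\rm Cov}(UX,VY)=pq\cdot{\rm Cov}(X,Y\mid U=V=1).\]
   Context: $X\perp\!\!\!\perp V\mid U$ denotes conditional independence of $X$ and $V$ given $U$. ${\rm Cov}(X,Y\mid U=V=1)$ is the covariance of $X$ and $Y$ under the conditional law given the event $\{U=V=1\}$. *)

theory Defs
  imports "HOL-Probability.Probability"
begin

definition covariance :: "'a measure \<Rightarrow> ('a \<Rightarrow> real) \<Rightarrow> ('a \<Rightarrow> real) \<Rightarrow> real" where
  "covariance M X Y =
     integral\<^sup>L M (\<lambda>\<omega>. (X \<omega> - integral\<^sup>L M X) * (Y \<omega> - integral\<^sup>L M Y))"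

definition cond_indep_discrete ::
  "'a measure \<Rightarrow> ('a \<Rightarrow> real) \<Rightarrow> ('a \<Rightarrow> real) \<Rightarrow> ('a \<Rightarrow> real) \<Rightarrow> bool" where
  "cond_indep_discrete M X V U \<longleftrightarrow>
     (\<forall>A\<in>sets borel. \<forall>B\<in>sets borel. \<forall>u.
        measure M {\<omega>\<in>space M. X \<omega> \<in> A \<and> V \<omega> \<in> B \<and> U \<omega> = u} * measure M {\<omega>\<in>space M. U \<omega> = u}
      = measure M {\<omega>\<in>space M. X \<omega> \<in> A \<and> U \<omega> = u} * measure M {\<omega>\<in>space M. V \<omega> \<in> B \<and> U \<omega> = u})"

end

theory Submission
  imports Defs
begin

text \<open>On the event U = 1 the variable U X coincides with X, so
  Cov(U X, V Y) = E[X Y; U=V=1] - E[X; U=1] E[Y; V=1].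
  Conditional independence of X and V given U yields E[X; U=V=1] = q E[X; U=1], and symmetrically
  E[Y; U=V=1] = p E[Y; V=1].  As P(U=V=1) = p q by independence, expanding the covariance under
  the conditional law on U=V=1 gives the same expression divided by p q.\<close>

lemma integrable_mult_of_square_integrable:
  fixes X Y :: "'a \<Rightarrow> real"
  assumes "X \<in> borel_measurable M" "Y \<in> borel_measurable M"
    and "integrable M (\<lambda>\<omega>. (X \<omega>)\<^sup>2)" "integrable M (\<lambda>\<omega>. (Y \<omega>)\<^sup>2)"
  shows "integrable M (\<lambda>\<omega>. X \<omega> * Y \<omega>)"
proof (rule Bochner_Integration.integrable_bound)
  show "integrable M (\<lambda>\<omega>. (X \<omega>)\<^sup>2 + (Y \<omega>)\<^sup>2)"
    using assms(3,4) by simp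
  show "AE \<omega> in M. norm (X \<omega> * Y \<omega>) \<le> norm ((X \<omega>)\<^sup>2 + (Y \<omega>)\<^sup>2)"
  proof (rule AE_I2)
    fix \<omega>
    have "2 * \<bar>X \<omega>\<bar> * \<bar>Y \<omega>\<bar> \<le> (X \<omega>)\<^sup>2 + (Y \<omega>)\<^sup>2"
      using sum_squares_bound[of "\<bar>X \<omega>\<bar>" "\<bar>Y \<omega>\<bar>"] by simp
    moreover have "0 \<le> \<bar>X \<omega>\<bar> * \<bar>Y \<omega>\<bar>"
      by simp
    ultimately show "norm (X \<omega> * Y \<omega>) \<le> norm ((X \<omega>)\<^sup>2 + (Y \<omega>)\<^sup>2)"
      unfolding real_norm_def abs_mult by linarith
  qed
qed (use assms(1,2) in simp)

lemma integrable_indicator_mult: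
  fixes f :: "'a \<Rightarrow> real"
  shows "R \<in> sets M \<Longrightarrow> integrable M f \<Longrightarrow> integrable M (\<lambda>\<omega>. indicator R \<omega> * f \<omega>)"
  using integrable_mult_indicator[of R M f] by simp

lemma covariance_cong_AE:
  assumes "AE \<omega> in M. X \<omega> = X' \<omega>" "AE \<omega> in M. Y \<omega> = Y' \<omega>"
    and "X \<in> borel_measurable M" "X' \<in> borel_measurable M"
    and "Y \<in> borel_measurable M" "Y' \<in> borel_measurable M"
  shows "covariance M X Y = covariance M X' Y'"
proof -
  have "integral\<^sup>L M X = integral\<^sup>L M X'" "integral\<^sup>L M Y = integral\<^sup>L M Y'"
    using assms by (auto intro: integral_cong_AE)
  then show ?thesis
    unfolding covariance_def using assms by (auto intro: integral_cong_AE)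
qed

lemma (in prob_space) covariance_eq:
  assumes "integrable M X" "integrable M Y" "integrable M (\<lambda>\<omega>. X \<omega> * Y \<omega>)"
  shows "covariance M X Y = expectation (\<lambda>\<omega>. X \<omega> * Y \<omega>) - expectation X * expectation Y"
proof -
  have "covariance M X Y = expectation (\<lambda>\<omega>. X \<omega> * Y \<omega> - expectation Y * X \<omega>
      - expectation X * Y \<omega> + expectation X * expectation Y)"
    unfolding covariance_def by (rule Bochner_Integration.integral_cong) (simp_all add: algebra_simps)
  also have "\<dots> = expectation (\<lambda>\<omega>. X \<omega> * Y \<omega>) - expectation X * expectation Y"
    using assms by (simp add: prob_space)
  finally show ?thesis .
qed

lemma (in finite_measure) uniform_measure_eq_density:
  assumes "S \<in> sets M" "measure M S > 0"
  shows "uniform_measure M S = density M (\<lambda>\<omega>. ennreal (indicator S \<omega> / measure M S))"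
  unfolding uniform_measure_def using assms
  by (intro arg_cong[where f="density M"] ext)
    (auto simp: emeasure_eq_measure divide_ennreal ennreal_1[symmetric] simp del: ennreal_1
      split: split_indicator)

lemma (in finite_measure) integral_uniform_measure:
  fixes f :: "'a \<Rightarrow> real"
  assumes "S \<in> sets M" "measure M S > 0" "f \<in> borel_measurable M"
  shows "integral\<^sup>L (uniform_measure M S) f = integral\<^sup>L M (\<lambda>\<omega>. indicator S \<omega> * f \<omega>) / measure M S"
  using assms by (simp add: uniform_measure_eq_density integral_density)

lemma (in finite_measure) integrable_uniform_measure:
  fixes f :: "'a \<Rightarrow> real"
  assumes "S \<in> sets M" "measure M S > 0" "integrable M f"
  shows "integrable (uniform_measure M S) f"
  using assms by (simp add: uniform_measure_eq_density integrable_density integrable_indicator_mult)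

lemma (in prob_space) covariance_uniform_measure:
  fixes X Y :: "'a \<Rightarrow> real"
  assumes S: "S \<in> sets M" "measure M S > 0"
    and "integrable M X" "integrable M Y" "integrable M (\<lambda>\<omega>. X \<omega> * Y \<omega>)"
  shows "covariance (uniform_measure M S) X Y
    = integral\<^sup>L M (\<lambda>\<omega>. indicator S \<omega> * (X \<omega> * Y \<omega>)) / measure M S
      - integral\<^sup>L M (\<lambda>\<omega>. indicator S \<omega> * X \<omega>) * integral\<^sup>L M (\<lambda>\<omega>. indicator S \<omega> * Y \<omega>)
        / (measure M S)\<^sup>2"
proof -
  interpret U: prob_space "uniform_measure M S"
    using S by (intro prob_space_uniform_measure) (auto simp: emeasure_eq_measure)
  show ?thesis
    using assms by (simp add: U.covariance_eq integrable_uniform_measure integral_uniform_measure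
        power2_eq_square)
qed

lemma (in prob_space) covariance_mult_zero_one:
  fixes U V X Y :: "'a \<Rightarrow> real"
  assumes "AE \<omega> in M. U \<omega> = 0 \<or> U \<omega> = 1" "AE \<omega> in M. V \<omega> = 0 \<or> V \<omega> = 1"
    and [measurable]: "U \<in> borel_measurable M" "V \<in> borel_measurable M"
    and "integrable M X" "integrable M Y" "integrable M (\<lambda>\<omega>. X \<omega> * Y \<omega>)"
  shows "covariance M (\<lambda>\<omega>. U \<omega> * X \<omega>) (\<lambda>\<omega>. V \<omega> * Y \<omega>)
    = expectation (\<lambda>\<omega>. indicator {\<omega>\<in>space M. U \<omega> = 1 \<and> V \<omega> = 1} \<omega> * (X \<omega> * Y \<omega>))
      - expectation (\<lambda>\<omega>. indicator {\<omega>\<in>space M. U \<omega> = 1} \<omega> * X \<omega>)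
        * expectation (\<lambda>\<omega>. indicator {\<omega>\<in>space M. V \<omega> = 1} \<omega> * Y \<omega>)"
proof -
  let ?S = "{\<omega>\<in>space M. U \<omega> = 1}" and ?T = "{\<omega>\<in>space M. V \<omega> = 1}"
  have [measurable]: "X \<in> borel_measurable M" "Y \<in> borel_measurable M"
    using assms(5,6) by auto
  have prod: "(\<lambda>\<omega>. indicator ?S \<omega> * X \<omega> * (indicator ?T \<omega> * Y \<omega>))
      = (\<lambda>\<omega>. indicator {\<omega>\<in>space M. U \<omega> = 1 \<and> V \<omega> = 1} \<omega> * (X \<omega> * Y \<omega>))"
    by (auto split: split_indicator)
  have "AE \<omega> in M. U \<omega> * X \<omega> = indicator ?S \<omega> * X \<omega>"
    using assms(1) AE_space by eventually_elim (auto split: split_indicator)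
  moreover have "AE \<omega> in M. V \<omega> * Y \<omega> = indicator ?T \<omega> * Y \<omega>"
    using assms(2) AE_space by eventually_elim (auto split: split_indicator)
  ultimately have "covariance M (\<lambda>\<omega>. U \<omega> * X \<omega>) (\<lambda>\<omega>. V \<omega> * Y \<omega>)
      = covariance M (\<lambda>\<omega>. indicator ?S \<omega> * X \<omega>) (\<lambda>\<omega>. indicator ?T \<omega> * Y \<omega>)"
    by (rule covariance_cong_AE) measurable
  also have "\<dots> = expectation (\<lambda>\<omega>. indicator ?S \<omega> * X \<omega> * (indicator ?T \<omega> * Y \<omega>))
      - expectation (\<lambda>\<omega>. indicator ?S \<omega> * X \<omega>) * expectation (\<lambda>\<omega>. indicator ?T \<omega> * Y \<omega>)"
    by (rule covariance_eq) (use assms(5-7) in \<open>simp_all add: prod integrable_indicator_mult\<close>)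
  finally show ?thesis
    by (simp only: prod)
qed

lemma (in finite_measure) weighted_integral_indicator_eq:
  fixes X :: "'a \<Rightarrow> real"
  assumes [measurable]: "X \<in> borel_measurable M" "S \<in> sets M" "T \<in> sets M"
    and "c \<ge> 0" "d \<ge> 0"
    and distr_eq: "\<And>A. A \<in> sets borel \<Longrightarrow>
      c * measure M ({\<omega>\<in>space M. X \<omega> \<in> A} \<inter> S) = d * measure M ({\<omega>\<in>space M. X \<omega> \<in> A} \<inter> T)"
  shows "c * integral\<^sup>L M (\<lambda>\<omega>. indicator S \<omega> * X \<omega>) = d * integral\<^sup>L M (\<lambda>\<omega>. indicator T \<omega> * X \<omega>)"
proof -
  define N where "N e R = distr (density M (\<lambda>\<omega>. ennreal (e * indicator R \<omega>))) borel X" for e R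
  have emeasure_N: "emeasure (N e R) A = ennreal (e * measure M ({\<omega>\<in>space M. X \<omega> \<in> A} \<inter> R))"
    if [measurable]: "A \<in> sets borel" "R \<in> sets M" and "e \<ge> 0" for A R e
  proof -
    have "emeasure (N e R) A = (\<integral>\<^sup>+\<omega>. ennreal e * indicator ({\<omega>\<in>space M. X \<omega> \<in> A} \<inter> R) \<omega> \<partial>M)"
      unfolding N_def
      by (simp add: emeasure_distr emeasure_density) (auto intro!: nn_integral_cong split: split_indicator)
    also have "\<dots> = ennreal (e * measure M ({\<omega>\<in>space M. X \<omega> \<in> A} \<inter> R))"
      using \<open>e \<ge> 0\<close> by (simp add: nn_integral_cmult_indicator emeasure_eq_measure ennreal_mult)
    finally show ?thesis .
  qed
  have sets_N: "sets (N e R) = sets borel" for e R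
    by (simp add: N_def)
  have "N c S = N d T"
    by (rule measure_eqI) (simp_all add: sets_N emeasure_N assms(4,5) distr_eq)
  then have "integral\<^sup>L (N c S) (\<lambda>x. x) = integral\<^sup>L (N d T) (\<lambda>x. x)"
    by simp
  then show ?thesis
    using assms(4,5) by (simp add: N_def integral_distr integral_density mult.assoc)
qed

lemma (in finite_measure) cond_indep_discrete_integral:
  fixes X V U :: "'a \<Rightarrow> real"
  assumes "cond_indep_discrete M X V U" "B \<in> sets borel"
    and [measurable]: "X \<in> borel_measurable M" "V \<in> borel_measurable M" "U \<in> borel_measurable M"
  shows "measure M {\<omega>\<in>space M. U \<omega> = u}
        * integral\<^sup>L M (\<lambda>\<omega>. indicator {\<omega>\<in>space M. V \<omega> \<in> B \<and> U \<omega> = u} \<omega> * X \<omega>)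
      = measure M {\<omega>\<in>space M. V \<omega> \<in> B \<and> U \<omega> = u}
        * integral\<^sup>L M (\<lambda>\<omega>. indicator {\<omega>\<in>space M. U \<omega> = u} \<omega> * X \<omega>)"
proof (rule weighted_integral_indicator_eq)
  fix A :: "real set"
  assume "A \<in> sets borel"
  with assms(1,2)
  have "measure M {\<omega>\<in>space M. X \<omega> \<in> A \<and> V \<omega> \<in> B \<and> U \<omega> = u} * measure M {\<omega>\<in>space M. U \<omega> = u}
      = measure M {\<omega>\<in>space M. X \<omega> \<in> A \<and> U \<omega> = u} * measure M {\<omega>\<in>space M. V \<omega> \<in> B \<and> U \<omega> = u}"
    unfolding cond_indep_discrete_def by blast
  moreover have "\<And>P Q. {\<omega>\<in>space M. P \<omega>} \<inter> {\<omega>\<in>space M. Q \<omega>} = {\<omega>\<in>space M. P \<omega> \<and> Q \<omega>}"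
    by auto
  ultimately show "measure M {\<omega>\<in>space M. U \<omega> = u}
        * measure M ({\<omega>\<in>space M. X \<omega> \<in> A} \<inter> {\<omega>\<in>space M. V \<omega> \<in> B \<and> U \<omega> = u})
      = measure M {\<omega>\<in>space M. V \<omega> \<in> B \<and> U \<omega> = u}
        * measure M ({\<omega>\<in>space M. X \<omega> \<in> A} \<inter> {\<omega>\<in>space M. U \<omega> = u})"
    by (simp only: mult.commute)
qed (use assms(2) in auto)

theorem mainTheorem11:
  fixes M :: "'a measure" and U V X Y :: "'a \<Rightarrow> real" and p q :: real
  assumes "prob_space M"
    and "p \<in> {0<..1}" and "q \<in> {0<..1}"
    and "prob_space.indep_var M borel U borel V"
    and "AE \<omega> in M. U \<omega> = 0 \<or> U \<omega> = 1"
    and "AE \<omega> in M. V \<omega> = 0 \<or> V \<omega> = 1"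
    and "measure M {\<omega>\<in>space M. U \<omega> = 1} = p"
    and "measure M {\<omega>\<in>space M. V \<omega> = 1} = q"
    and "X \<in> borel_measurable M" and "Y \<in> borel_measurable M"
    and "integrable M (\<lambda>\<omega>. (X \<omega>)\<^sup>2)" and "integrable M (\<lambda>\<omega>. (Y \<omega>)\<^sup>2)"
    and "cond_indep_discrete M X V U"
    and "cond_indep_discrete M Y U V"
  shows "covariance M (\<lambda>\<omega>. U \<omega> * X \<omega>) (\<lambda>\<omega>. V \<omega> * Y \<omega>)
         = p * q * covariance (uniform_measure M {\<omega>\<in>space M. U \<omega> = 1 \<and> V \<omega> = 1}) X Y"
proof -
  interpret prob_space M
    by (rule assms(1))
  have [measurable]: "U \<in> borel_measurable M" "V \<in> borel_measurable M"
    using indep_var_rv1[OF assms(4)] indep_var_rv2[OF assms(4)] by auto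
  let ?S = "{\<omega>\<in>space M. U \<omega> = 1 \<and> V \<omega> = 1}"
  have S_eq: "{\<omega>\<in>space M. V \<omega> = 1 \<and> U \<omega> = 1} = ?S"
    by auto
  have PS: "measure M ?S = p * q"
    using prob_indep_random_variable[OF assms(4), of "{1}" "{1}"] assms(7,8) by simp
  have p: "p > 0" and q: "q > 0"
    using assms(2,3) by auto
  have integrable: "integrable M X" "integrable M Y" "integrable M (\<lambda>\<omega>. X \<omega> * Y \<omega>)"
    using assms(9-12)
    by (auto intro: square_integrable_imp_integrable integrable_mult_of_square_integrable)
  have EX: "integral\<^sup>L M (\<lambda>\<omega>. indicator ?S \<omega> * X \<omega>)
      = q * integral\<^sup>L M (\<lambda>\<omega>. indicator {\<omega>\<in>space M. U \<omega> = 1} \<omega> * X \<omega>)"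
    using cond_indep_discrete_integral[OF assms(13), of "{1}" 1] assms(7,9) PS p
    by (simp add: S_eq mult.assoc)
  have EY: "integral\<^sup>L M (\<lambda>\<omega>. indicator ?S \<omega> * Y \<omega>)
      = p * integral\<^sup>L M (\<lambda>\<omega>. indicator {\<omega>\<in>space M. V \<omega> = 1} \<omega> * Y \<omega>)"
    using cond_indep_discrete_integral[OF assms(14), of "{1}" 1] assms(8,10) PS q
    by (simp add: S_eq mult.left_commute)
  have "covariance M (\<lambda>\<omega>. U \<omega> * X \<omega>) (\<lambda>\<omega>. V \<omega> * Y \<omega>)
      = expectation (\<lambda>\<omega>. indicator ?S \<omega> * (X \<omega> * Y \<omega>))
        - expectation (\<lambda>\<omega>. indicator {\<omega>\<in>space M. U \<omega> = 1} \<omega> * X \<omega>)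
          * expectation (\<lambda>\<omega>. indicator {\<omega>\<in>space M. V \<omega> = 1} \<omega> * Y \<omega>)"
    by (rule covariance_mult_zero_one) (use assms(5,6) integrable in auto)
  also have "\<dots> = p * q * (expectation (\<lambda>\<omega>. indicator ?S \<omega> * (X \<omega> * Y \<omega>)) / (p * q)
        - expectation (\<lambda>\<omega>. indicator ?S \<omega> * X \<omega>) * expectation (\<lambda>\<omega>. indicator ?S \<omega> * Y \<omega>)
          / (p * q)\<^sup>2)"
    unfolding EX EY using p q by (simp add: field_simps power2_eq_square)
  also have "\<dots> = p * q * covariance (uniform_measure M ?S) X Y"
    using covariance_uniform_measure[of ?S X Y] integrable PS p q by simp
  finally show ?thesis .
qed

end
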